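(* Let $n \geq 2$ and let $P_n=u_0u_1\dots u_n$ be the path with $n$ edges. For every walk $W$ of $P_n$, there exists a walk of $P_n$ equivalent to $W$ which follows a walk $S$ of the form $S=u_iu_{i-1}\dots u_mu_{m+1}\dots u_Mu_{M-1}\dots u_{j}$ for some indices $m \leq i\le j \leq M$.
   Context: A walk of a graph $G$ is a sequence of vertices $v_0\dots v_l$ with $v_tv_{t+1}\in E(G)$ for all $t$ (vertices and edges may repeat). A walk $W'$ follows the walk $W=v_0\dots v_l$ if there are non-negative integers $i_0,\dots,i_{l-1}$ such that $W'=v_0(v_1v_0)^{i_0}v_1\dots v_{l-1}(v_lv_{l-1})^{i_{l-1}}v_l$, i.e. $W'$ is obtained by traversing $W$ from start to end and inserting, along each edge $v_tv_{t+1}$, some number $i_t$ of half-turns $v_{t+1}v_tv_{t+1}$. Two walks are equivalent if their multisets of traversed edges are equal. *)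

theory Defs
  imports Main "HOL-Library.Multiset"
begin

text \<open>The path P_n = u_0 u_1 ... u_n: vertex u_k is represented by the natural number k,
  vertex set {0..n}, and u_a u_b is an edge iff the indices differ by one.\<close>

definition path_adj :: "nat \<Rightarrow> nat \<Rightarrow> bool" where
  "path_adj a b \<longleftrightarrow> Suc a = b \<or> Suc b = a"

definition is_walk_path :: "nat \<Rightarrow> nat list \<Rightarrow> bool" where
  "is_walk_path n W \<longleftrightarrow> W \<noteq> [] \<and> set W \<subseteq> {0..n} \<and>
     (\<forall>t. Suc t < length W \<longrightarrow> path_adj (W ! t) (W ! Suc t))"

definition walk_edges :: "'a list \<Rightarrow> 'a set multiset" where
  "walk_edges W = mset (map (\<lambda>(a, b). {a, b}) (zip W (tl W)))"

definition equivalent_walks :: "'a list \<Rightarrow> 'a list \<Rightarrow> bool" where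
  "equivalent_walks W1 W2 \<longleftrightarrow> walk_edges W1 = walk_edges W2"

text \<open>expand W cs = v_0 (v_1 v_0)^{i_0} v_1 ... v_{l-1} (v_l v_{l-1})^{i_{l-1}} v_l
  for W = v_0 ... v_l and cs = [i_0, ..., i_{l-1}].\<close>

fun expand :: "'a list \<Rightarrow> nat list \<Rightarrow> 'a list" where
  "expand (v # w # rest) (c # cs) = v # concat (replicate c [w, v]) @ expand (w # rest) cs"
| "expand W cs = W"

definition follows :: "'a list \<Rightarrow> 'a list \<Rightarrow> bool" where
  "follows W' W \<longleftrightarrow> (\<exists>cs. length cs = length W - 1 \<and> W' = expand W cs)"

definition zigzag :: "nat \<Rightarrow> nat \<Rightarrow> nat \<Rightarrow> nat \<Rightarrow> nat list" where
  "zigzag i m M j = rev [m..<Suc i] @ [Suc m..<Suc M] @ rev [j..<M]"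

end

theory Submission
  imports Defs
begin

text \<open>Let W run from s to t, and let a and b be the smallest and the largest vertex it visits.
  W traverses every edge u_k u_{k+1} with a \<le> k < b (it has to get from u_a to u_b) and no other
  edge, and it traverses u_k u_{k+1} an odd number of times exactly when k lies between s and t.
  The zigzag from min s t down to u_a, up to u_b and back down to max s t traverses each of these
  edges once or twice, with the same parity. So the surplus of W over the zigzag is an even
  multiset of edges of the zigzag, and inserting half of it as half-turns gives a walk that
  follows the zigzag and is equivalent to W.\<close>

definition path_edge :: "nat \<Rightarrow> nat set" where
  "path_edge k = {k, Suc k}"

lemma path_edge_inject [simp]: "path_edge k = path_edge l \<longleftrightarrow> k = l"
  unfolding path_edge_def by (auto simp: doubleton_eq_iff)

lemma path_adj_sym: "path_adj v w \<Longrightarrow> path_adj w v"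
  unfolding path_adj_def by auto

lemma path_adj_eq_path_edge_iff:
  "path_adj v w \<Longrightarrow> {v, w} = path_edge k \<longleftrightarrow> (v \<le> k) \<noteq> (w \<le> k)"
  unfolding path_adj_def path_edge_def by (auto simp: doubleton_eq_iff)

lemma count_image_mset_path_edge: "count (image_mset path_edge N) (path_edge k) = count N k"
  by (induction N) auto

lemma is_walk_path_iff_successively:
  "is_walk_path n W \<longleftrightarrow> W \<noteq> [] \<and> set W \<subseteq> {0..n} \<and> successively path_adj W"
  unfolding is_walk_path_def successively_conv_nth by simp

lemma walk_edges_Nil [simp]: "walk_edges [] = {#}"
  and walk_edges_singleton [simp]: "walk_edges [x] = {#}"
  and walk_edges_Cons_Cons [simp]: "walk_edges (x # y # r) = add_mset {x, y} (walk_edges (y # r))"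
  by (simp_all add: walk_edges_def)

lemma walk_edges_append:
  "xs \<noteq> [] \<Longrightarrow> ys \<noteq> [] \<Longrightarrow>
    walk_edges (xs @ ys) = walk_edges xs + add_mset {last xs, hd ys} (walk_edges ys)"
proof (induction xs rule: induct_list012)
  case (3 x y r)
  then show ?case by simp
qed (auto simp: neq_Nil_conv)

lemma walk_edges_append_overlap:
  assumes "xs \<noteq> []" "ys \<noteq> []" "last xs = hd ys"
  shows "walk_edges (xs @ tl ys) = walk_edges xs + walk_edges ys"
  using assms by (cases ys; cases "tl ys") (simp_all add: walk_edges_append)

lemma walk_edges_rev [simp]: "walk_edges (rev xs) = walk_edges xs"
proof (induction xs rule: induct_list012)
  case (3 x y r)
  have "walk_edges (rev (x # y # r)) = walk_edges (rev (y # r)) + {#{y, x}#}"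
    by (simp add: walk_edges_append [of "rev (y # r)" "[x]", simplified] last_rev)
  with "3.IH" show ?case by (simp add: insert_commute)
qed simp_all

lemma walk_edges_upt: "walk_edges [a..<Suc b] = image_mset path_edge (mset [a..<b])"
proof (induction b)
  case (Suc b)
  show ?case
  proof (cases "a \<le> b")
    case True
    then have "walk_edges [a..<Suc (Suc b)] = walk_edges [a..<Suc b] + {#path_edge b#}"
      using walk_edges_append [of "[a..<Suc b]" "[Suc b]"] by (simp add: path_edge_def)
    with Suc.IH True show ?thesis by simp
  qed simp
qed simp

lemma walk_edge_is_path_edge:
  "successively path_adj W \<Longrightarrow> set W \<subseteq> {a..b} \<Longrightarrow> e \<in># walk_edges W \<Longrightarrow>
    \<exists>k. e = path_edge k \<and> a \<le> k \<and> k < b"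
proof (induction W rule: induct_list012)
  case (3 x y r)
  show ?case
  proof (cases "e = {x, y}")
    case True
    with "3.prems"(1,2) show ?thesis
      by (intro exI [of _ "min x y"]) (auto simp: path_adj_def path_edge_def insert_commute)
  next
    case False
    with "3.prems" "3.IH"(2) show ?thesis by simp
  qed
qed simp_all

lemma path_edge_in_walk_edges_if_crossing:
  "successively path_adj W \<Longrightarrow> u \<in> set W \<Longrightarrow> v \<in> set W \<Longrightarrow> (u \<le> k) \<noteq> (v \<le> k) \<Longrightarrow>
    path_edge k \<in># walk_edges W"
proof (induction W arbitrary: u v rule: induct_list012)
  case (3 x y r)
  show ?case
  proof (cases "(x \<le> k) = (y \<le> k)")
    case True
    \<comment> \<open>an endpoint equal to x may be replaced by y, which lies on the same side of k\<close>
    then obtain u' v' where "u' \<in> set (y # r)" "v' \<in> set (y # r)" "(u' \<le> k) \<noteq> (v' \<le> k)"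
      using "3.prems"(2-4) by (metis list.set_intros(1) set_ConsD)
    with "3.IH"(2) "3.prems"(1) show ?thesis by simp
  next
    case False
    with "3.prems"(1) show ?thesis using path_adj_eq_path_edge_iff [of x y k] by auto
  qed
qed auto

lemma odd_count_walk_edges_iff:
  "successively path_adj W \<Longrightarrow> W \<noteq> [] \<Longrightarrow>
    odd (count (walk_edges W) (path_edge k)) \<longleftrightarrow> (hd W \<le> k) \<noteq> (last W \<le> k)"
proof (induction W rule: induct_list012)
  case (3 x y r)
  then have "count (walk_edges (x # y # r)) (path_edge k) =
      count (walk_edges (y # r)) (path_edge k) + (if (x \<le> k) \<noteq> (y \<le> k) then 1 else 0)"
    by (simp add: path_adj_eq_path_edge_iff)
  with 3 show ?case by auto
qed simp_all

lemma expand_Cons: "\<exists>R. expand (v # S) cs = v # R"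
  by (induction "v # S" cs arbitrary: v S rule: expand.induct) auto

lemma set_expand: "set (expand S cs) \<subseteq> set S"
  by (induction S cs rule: expand.induct) auto

lemma successively_expand:
  "symp R \<Longrightarrow> successively R S \<Longrightarrow> successively R (expand S cs)"
proof (induction S cs rule: expand.induct)
  case (1 v w rest c cs)
  obtain T where T: "expand (w # rest) cs = w # T"
    using expand_Cons [of w _ cs] by blast
  have "R v w" "R w v" using "1.prems" by (auto dest: sympD)
  then have "successively R (v # concat (replicate c [w, v]) @ w # T) \<longleftrightarrow> successively R (w # T)"
    by (induction c) auto
  with "1.IH" "1.prems" T show ?case by simp
qed auto

lemma walk_edges_half_turns:
  "walk_edges (v # concat (replicate c [w, v]) @ R) =
    replicate_mset c {v, w} + replicate_mset c {v, w} + walk_edges (v # R)"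
  by (induction c) (auto simp: insert_commute)

lemma expand_adding_edges_twice:
  "set_mset X \<subseteq> set_mset (walk_edges S) \<Longrightarrow>
    \<exists>cs. length cs = length S - 1 \<and> walk_edges (expand S cs) = walk_edges S + X + X"
proof (induction S arbitrary: X rule: induct_list012)
  case (3 v w r)
  define c where "c = count X {v, w}"
  define X' where "X' = filter_mset (\<lambda>e. e \<noteq> {v, w}) X"
  have X: "X = replicate_mset c {v, w} + X'"
    unfolding X'_def c_def by (rule multiset_eqI) auto
  have "set_mset X' \<subseteq> set_mset (walk_edges (w # r))"
    using "3.prems" unfolding X'_def by auto
  with "3.IH"(2) obtain cs where cs: "length cs = length (w # r) - 1"
    "walk_edges (expand (w # r) cs) = walk_edges (w # r) + X' + X'" by blast
  obtain T where T: "expand (w # r) cs = w # T"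
    using expand_Cons [of w _ cs] by blast
  have "walk_edges (expand (v # w # r) (c # cs)) =
      replicate_mset c {v, w} + replicate_mset c {v, w} + walk_edges (v # w # T)"
    using walk_edges_half_turns [of v c w "w # T"] T by simp
  also have "\<dots> = walk_edges (v # w # r) + X + X"
    using cs(2) T unfolding X by (simp add: ac_simps)
  finally show ?case using cs(1) by (intro exI [of _ "c # cs"]) simp
qed (auto intro: exI [of _ "[]"])

lemma set_follows: "follows W' S \<Longrightarrow> set W' \<subseteq> set S"
  unfolding follows_def by (auto dest: set_expand [THEN subsetD])

lemma is_walk_path_follows:
  assumes "is_walk_path n S" "follows W' S"
  shows "is_walk_path n W'"
proof -
  obtain cs where W': "W' = expand S cs"
    using assms(2) unfolding follows_def by blast
  obtain v S' where S: "S = v # S'"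
    using assms(1) by (cases S) (auto simp: is_walk_path_iff_successively)
  have "symp path_adj"
    by (auto intro: sympI path_adj_sym)
  then have "successively path_adj W'"
    using assms(1) successively_expand unfolding W' is_walk_path_iff_successively by blast
  moreover have "W' \<noteq> []"
    using expand_Cons [of v S' cs] unfolding W' S by auto
  moreover have "set W' \<subseteq> set S"
    using set_follows assms(2) .
  ultimately show ?thesis
    using assms(1) unfolding is_walk_path_iff_successively by blast
qed

lemma mset_eq_double_if_even_counts:
  "(\<And>x. even (count D x)) \<Longrightarrow> \<exists>X. D = X + X"
proof (induction "size D" arbitrary: D rule: less_induct)
  case less
  show ?case
  proof (cases "D = {#}")
    case False
    then obtain x where "x \<in># D" by blast
    then have "0 < count D x" by simp
    with less.prems [of x] have "2 \<le> count D x" by presburger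
    define D' where "D' = D - {#x, x#}"
    have D: "D = add_mset x (add_mset x D')"
      unfolding D'_def using \<open>2 \<le> count D x\<close> by (intro multiset_eqI) auto
    have "even (count D' y)" for y
      using less.prems [of y] unfolding D by (cases "y = x") auto
    moreover have "size D' < size D"
      unfolding D by simp
    ultimately obtain X' where "D' = X' + X'"
      using less.hyps by blast
    then show ?thesis
      unfolding D by (intro exI [of _ "add_mset x X'"]) simp
  qed simp
qed

lemma exists_follows_with_walk_edges:
  assumes "walk_edges S \<subseteq># E"
    and "\<And>e. even (count (E - walk_edges S) e)"
    and "set_mset E \<subseteq> set_mset (walk_edges S)"
  shows "\<exists>W'. follows W' S \<and> walk_edges W' = E"
proof -
  obtain X where X: "E - walk_edges S = X + X"
    using mset_eq_double_if_even_counts [OF assms(2)] by blast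
  have "set_mset X \<subseteq> set_mset (E - walk_edges S)"
    unfolding X by simp
  then have "set_mset X \<subseteq> set_mset (walk_edges S)"
    using assms(3) by (auto dest: in_diffD)
  then obtain cs where cs: "length cs = length S - 1"
    "walk_edges (expand S cs) = walk_edges S + X + X"
    using expand_adding_edges_twice [of X S] by blast
  then have "walk_edges (expand S cs) = walk_edges S + (E - walk_edges S)"
    unfolding X by (simp add: add.assoc)
  also have "\<dots> = E"
    using assms(1) by simp
  finally show ?thesis
    using cs(1) unfolding follows_def by blast
qed

lemma successively_append_overlap:
  assumes "xs \<noteq> []" "ys \<noteq> []" "last xs = hd ys"
  shows "successively P (xs @ tl ys) \<longleftrightarrow> successively P xs \<and> successively P ys"
  using assms by (cases ys; cases "tl ys") (auto simp: successively_append_iff)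

lemma successively_path_adj_upt: "successively path_adj [a..<b]"
  by (auto simp: successively_conv_nth path_adj_def)

lemma successively_path_adj_rev_upt: "successively path_adj (rev [a..<b])"
  using successively_path_adj_upt [of a b] by (simp add: path_adj_def disj_commute)

lemma zigzag_eq_overlapping_append:
  assumes "m \<le> i" "m \<le> M" "j \<le> M"
  shows "zigzag i m M j = rev [m..<Suc i] @ tl ([m..<Suc M] @ tl (rev [j..<Suc M]))"
  using assms by (simp add: zigzag_def)

lemma walk_edges_zigzag:
  assumes "m \<le> i" "m \<le> M" "j \<le> M"
  shows "walk_edges (zigzag i m M j) = image_mset path_edge (mset [m..<i] + mset [m..<M] + mset [j..<M])"
proof -
  have "walk_edges (zigzag i m M j) =
      walk_edges (rev [m..<Suc i]) + walk_edges ([m..<Suc M] @ tl (rev [j..<Suc M]))"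
    unfolding zigzag_eq_overlapping_append [OF assms] using assms
    by (intro walk_edges_append_overlap) (simp_all add: last_rev del: upt_Suc)
  also have "\<dots> = walk_edges (rev [m..<Suc i]) + walk_edges [m..<Suc M] + walk_edges (rev [j..<Suc M])"
    using assms by (subst walk_edges_append_overlap) (simp_all add: hd_rev del: upt_Suc)
  finally show ?thesis
    by (simp add: walk_edges_upt del: upt_Suc)
qed

lemma successively_path_adj_zigzag:
  assumes "m \<le> i" "m \<le> M" "j \<le> M"
  shows "successively path_adj (zigzag i m M j)"
proof -
  have "successively path_adj (zigzag i m M j) \<longleftrightarrow>
      successively path_adj (rev [m..<Suc i]) \<and> successively path_adj ([m..<Suc M] @ tl (rev [j..<Suc M]))"
    unfolding zigzag_eq_overlapping_append [OF assms] using assms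
    by (intro successively_append_overlap) (simp_all add: last_rev del: upt_Suc)
  also have "\<dots> \<longleftrightarrow> successively path_adj (rev [m..<Suc i]) \<and> successively path_adj [m..<Suc M] \<and>
      successively path_adj (rev [j..<Suc M])"
    using assms by (subst successively_append_overlap) (simp_all add: hd_rev del: upt_Suc)
  finally show ?thesis
    by (simp only: successively_path_adj_upt successively_path_adj_rev_upt)
qed

lemma set_zigzag_subset: "m \<le> i \<Longrightarrow> i \<le> j \<Longrightarrow> j \<le> M \<Longrightarrow> set (zigzag i m M j) \<subseteq> {m..M}"
  by (auto simp: zigzag_def)

lemma is_walk_path_zigzag:
  assumes "m \<le> i" "i \<le> j" "j \<le> M" "M \<le> n"
  shows "is_walk_path n (zigzag i m M j)"
  using assms successively_path_adj_zigzag [of m i M j] set_zigzag_subset [of m i j M]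
  by (auto simp: is_walk_path_iff_successively zigzag_def)

lemma count_walk_edges_zigzag:
  assumes "m \<le> i" "i \<le> j" "j \<le> M"
  shows "count (walk_edges (zigzag i m M j)) (path_edge k) =
    (if m \<le> k \<and> k < M then if i \<le> k \<and> k < j then 1 else 2 else 0)"
  using assms by (auto simp: walk_edges_zigzag count_image_mset_path_edge)

definition walk_zigzag :: "nat list \<Rightarrow> nat list" where
  "walk_zigzag W = zigzag (min (hd W) (last W)) (Min (set W)) (Max (set W)) (max (hd W) (last W))"

lemma Min_le_endpoints_le_Max:
  "W \<noteq> [] \<Longrightarrow> Min (set W) \<le> min (hd W) (last W) \<and> max (hd W) (last W) \<le> Max (set W)"
  by simp

lemma walk_zigzag_edges_surplus:
  assumes W: "successively path_adj W" "W \<noteq> []"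
  shows "walk_edges (walk_zigzag W) \<subseteq># walk_edges W"
    and "\<And>e. even (count (walk_edges W - walk_edges (walk_zigzag W)) e)"
    and "set_mset (walk_edges W) \<subseteq> set_mset (walk_edges (walk_zigzag W))"
proof -
  define a where "a = Min (set W)"
  define b where "b = Max (set W)"
  define i where "i = min (hd W) (last W)"
  define j where "j = max (hd W) (last W)"
  define S where "S = walk_zigzag W"
  have ij: "a \<le> i" "i \<le> j" "j \<le> b"
    using Min_le_endpoints_le_Max [OF W(2)] by (auto simp: a_def b_def i_def j_def)
  have S: "S = zigzag i a b j"
    by (simp add: S_def walk_zigzag_def a_def b_def i_def j_def)
  have surplus: "count (walk_edges S) e \<le> count (walk_edges W) e \<and>
      even (count (walk_edges W) e - count (walk_edges S) e) \<and>
      (0 < count (walk_edges W) e \<longrightarrow> 0 < count (walk_edges S) e)" for e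
  proof (cases "\<exists>k. e = path_edge k \<and> a \<le> k \<and> k < b")
    case True
    then obtain k where e: "e = path_edge k" and k: "a \<le> k" "k < b" by blast
    have "a \<in> set W" "b \<in> set W"
      using W(2) by (simp_all add: a_def b_def)
    with k have "1 \<le> count (walk_edges W) e"
      using path_edge_in_walk_edges_if_crossing [OF W(1)] unfolding e by fastforce
    moreover have "odd (count (walk_edges W) e) \<longleftrightarrow> (hd W \<le> k) \<noteq> (last W \<le> k)"
      unfolding e by (rule odd_count_walk_edges_iff [OF W])
    moreover have "(hd W \<le> k) \<noteq> (last W \<le> k) \<longleftrightarrow> i \<le> k \<and> k < j"
      unfolding i_def j_def by linarith
    moreover have "count (walk_edges S) e = (if i \<le> k \<and> k < j then 1 else 2)"
      using count_walk_edges_zigzag [OF ij] k unfolding S e by simp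
    ultimately show ?thesis by presburger
  next
    case False
    have "set W \<subseteq> {a..b}"
      using W(2) by (auto simp: a_def b_def)
    moreover have "set S \<subseteq> {a..b}" "successively path_adj S"
      unfolding S using ij set_zigzag_subset [OF ij] successively_path_adj_zigzag [of a i b j] by auto
    ultimately have "e \<notin># walk_edges W" "e \<notin># walk_edges S"
      using False walk_edge_is_path_edge [OF W(1)] walk_edge_is_path_edge [of S a b] by blast+
    then show ?thesis by (simp add: not_in_iff)
  qed
  then show "walk_edges (walk_zigzag W) \<subseteq># walk_edges W"
    by (simp add: S_def subseteq_mset_def)
  from surplus show "even (count (walk_edges W - walk_edges (walk_zigzag W)) e)" for e
    by (simp add: S_def)
  from surplus show "set_mset (walk_edges W) \<subseteq> set_mset (walk_edges (walk_zigzag W))"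
    unfolding S_def by (meson count_greater_zero_iff subsetI)
qed

theorem lemma5p3:
  fixes n :: nat and W :: "nat list"
  assumes "n \<ge> 2"
    and "is_walk_path n W"
  shows "\<exists>W' S i j m M. is_walk_path n W' \<and> equivalent_walks W' W \<and>
           is_walk_path n S \<and> follows W' S \<and>
           m \<le> i \<and> i \<le> j \<and> j \<le> M \<and> S = zigzag i m M j"
proof -
  have W: "successively path_adj W" "W \<noteq> []" "set W \<subseteq> {0..n}"
    using assms(2) by (simp_all add: is_walk_path_iff_successively)
  obtain W' where W': "follows W' (walk_zigzag W)" "walk_edges W' = walk_edges W"
    using exists_follows_with_walk_edges [OF walk_zigzag_edges_surplus [OF W(1,2)]] by blast
  have "Max (set W) \<le> n"
    using W(2,3) by auto
  then have S: "is_walk_path n (walk_zigzag W)"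
    unfolding walk_zigzag_def using Min_le_endpoints_le_Max [OF W(2)]
    by (intro is_walk_path_zigzag) auto
  show ?thesis
  proof (intro exI conjI)
    show "is_walk_path n W'"
      using is_walk_path_follows [OF S W'(1)] .
    show "equivalent_walks W' W"
      unfolding equivalent_walks_def by (rule W'(2))
  qed (use S W'(1) Min_le_endpoints_le_Max [OF W(2)] in \<open>auto simp: walk_zigzag_def\<close>)
qed

end
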